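(* Let $r\ge1$ be an integer, let $\mathscr C$ be a class of graphs with sub-exponential expansion, and for every integer $p\ge2$ let $g(p)$ be an integer such that every graph in $\mathscr C$ with girth at least $g(p)$ is $p$-path degenerate. Then for every $G\in\mathscr C$: (i) if $q$ is an integer with $r<q<2r$ and $\mathrm{girth}(G)\ge g(2q)$, then $\mathrm{wcol}_r(G)\le r+2+\left\lfloor\log_2\!\left(\frac{q-1}{q-r}\right)\right\rfloor$; (ii) if $\mathrm{girth}(G)\ge g(4r)$, then $\mathrm{wcol}_r(G)\le r+2$.
   Context: Graphs are finite and simple; the girth is the length of a shortest cycle. A strict ear of a graph $G$ is a path of $G$ whose internal vertices all have degree $2$ in $G$ and whose two endpoints are distinct. For an integer $p\ge1$, a $p$-reduction of $G$ is the deletion of either an isolated vertex, or a vertex of degree $1$, or the internal vertices of a strict ear of $G$ of length at least $p$. A graph is $p$-path degenerate if it can be reduced to the empty graph by a sequence of $p$-reductions. For a linear order $\pi$ of $V(G)$, $u$ is weakly $r$-reachable from $v$ if $u\le_\pi v$ and there is a $u$–$v$ path $P$ of length at most $r$ with $u<_\pi w$ for every internal vertex $w$ of $P$; $\mathrm{WReach}_r[G,\pi,v]$ is the set of such $u$, and $\mathrm{wcol}_r(G)=\min_{\pi}\max_{v\in V(G)}|\mathrm{WReach}_r[G,\pi,v]|$. A class $\mathscr C$ has sub-exponential expansion if $\sup\{\nabla_r(G):G\in\mathscr C\}=2^{o(r)}$, where $\nabla_r(G)$ is the maximum of $|E(H)|/|V(H)|$ over nonempty shallow minors $H$ of $G$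 at depth $r$ (minors obtained by contracting vertex-disjoint subgraphs of radius at most $r$ and deleting vertices and edges). *)

theory Defs
  imports Complex_Main "HOL-Library.Extended_Nat"
begin

type_synonym 'a graph = "'a set \<times> 'a set set"

definition verts :: "'a graph \<Rightarrow> 'a set" where "verts G = fst G"
definition edges :: "'a graph \<Rightarrow> 'a set set" where "edges G = snd G"

definition wf_graph :: "'a graph \<Rightarrow> bool" where
  "wf_graph G \<longleftrightarrow> finite (verts G) \<and>
     edges G \<subseteq> {{u, v} | u v. u \<in> verts G \<and> v \<in> verts G \<and> u \<noteq> v}"

definition adj :: "'a graph \<Rightarrow> 'a \<Rightarrow> 'a \<Rightarrow> bool" where
  "adj G u v \<longleftrightarrow> {u, v} \<in> edges G \<and> u \<noteq> v"

definition degree :: "'a graph \<Rightarrow> 'a \<Rightarrow> nat" where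
  "degree G v = card {u \<in> verts G. adj G v u}"

text \<open>A path is a nonempty list of distinct vertices, consecutive ones adjacent;
  its length is the number of edges, i.e. length xs - 1.\<close>
definition is_path :: "'a graph \<Rightarrow> 'a list \<Rightarrow> bool" where
  "is_path G xs \<longleftrightarrow> xs \<noteq> [] \<and> distinct xs \<and> set xs \<subseteq> verts G \<and>
     (\<forall>i. Suc i < length xs \<longrightarrow> adj G (xs ! i) (xs ! Suc i))"

definition is_cycle :: "'a graph \<Rightarrow> 'a list \<Rightarrow> bool" where
  "is_cycle G xs \<longleftrightarrow> length xs \<ge> 3 \<and> is_path G xs \<and> adj G (last xs) (hd xs)"

text \<open>Girth: length of a shortest cycle (infinity if acyclic).\<close>
definition girth :: "'a graph \<Rightarrow> enat" where
  "girth G = Inf {enat (length xs) | xs. is_cycle G xs}"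

definition del_verts :: "'a graph \<Rightarrow> 'a set \<Rightarrow> 'a graph" where
  "del_verts G S = (verts G - S, {e \<in> edges G. e \<inter> S = {}})"

definition induced :: "'a graph \<Rightarrow> 'a set \<Rightarrow> 'a graph" where
  "induced G X = (X, {e \<in> edges G. e \<subseteq> X})"

definition internal :: "'a list \<Rightarrow> 'a set" where
  "internal xs = set (butlast (tl xs))"

definition strict_ear :: "'a graph \<Rightarrow> 'a list \<Rightarrow> bool" where
  "strict_ear G xs \<longleftrightarrow> is_path G xs \<and> hd xs \<noteq> last xs \<and>
     (\<forall>w \<in> internal xs. degree G w = 2)"

inductive p_reduction :: "nat \<Rightarrow> 'a graph \<Rightarrow> 'a graph \<Rightarrow> bool" for p where
  isolated: "v \<in> verts G \<Longrightarrow> degree G v = 0 \<Longrightarrow> p_reduction p G (del_verts G {v})"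
| leaf: "v \<in> verts G \<Longrightarrow> degree G v = 1 \<Longrightarrow> p_reduction p G (del_verts G {v})"
| ear: "strict_ear G xs \<Longrightarrow> length xs - 1 \<ge> p \<Longrightarrow>
          p_reduction p G (del_verts G (internal xs))"

definition p_path_degenerate :: "nat \<Rightarrow> 'a graph \<Rightarrow> bool" where
  "p_path_degenerate p G \<longleftrightarrow> (p_reduction p)\<^sup>*\<^sup>* G ({}, {})"

text \<open>Linear orders of V are represented by injections \<pi> : V \<rightarrow> nat,
  u \<le>_\<pi> v iff \<pi> u \<le> \<pi> v.\<close>
definition WReach :: "nat \<Rightarrow> 'a graph \<Rightarrow> ('a \<Rightarrow> nat) \<Rightarrow> 'a \<Rightarrow> 'a set" where
  "WReach r G \<pi> v = {u \<in> verts G. \<pi> u \<le> \<pi> v \<and>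
     (\<exists>xs. is_path G xs \<and> hd xs = u \<and> last xs = v \<and> length xs - 1 \<le> r \<and>
           (\<forall>w \<in> internal xs. \<pi> u < \<pi> w))}"

definition wcol :: "nat \<Rightarrow> 'a graph \<Rightarrow> nat" where
  "wcol r G = (LEAST k. \<exists>\<pi>. inj_on \<pi> (verts G) \<and>
       (\<forall>v \<in> verts G. card (WReach r G \<pi> v) \<le> k))"

text \<open>Branch sets of a depth-r shallow minor: nonempty vertex sets X such that
  G[X] has a centre from which every vertex of X is reachable within X by a path
  of length at most r (radius at most r, hence connected).\<close>
definition radius_le :: "'a graph \<Rightarrow> 'a set \<Rightarrow> nat \<Rightarrow> bool" where
  "radius_le G X r \<longleftrightarrow> (\<exists>c \<in> X. \<forall>x \<in> X. \<exists>xs. is_path (induced G X) xs \<and>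
      hd xs = c \<and> last xs = x \<and> length xs - 1 \<le> r)"

text \<open>A shallow minor of G at depth r, given by its set B of branch sets (vertices)
  and a set F of edges between branch sets joined by an edge of G.\<close>
definition shallow_minor :: "nat \<Rightarrow> 'a graph \<Rightarrow> 'a set set \<Rightarrow> 'a set set set \<Rightarrow> bool" where
  "shallow_minor r G B F \<longleftrightarrow>
     (\<forall>X \<in> B. X \<noteq> {} \<and> X \<subseteq> verts G \<and> radius_le G X r) \<and>
     (\<forall>X \<in> B. \<forall>Y \<in> B. X \<noteq> Y \<longrightarrow> X \<inter> Y = {}) \<and>
     F \<subseteq> {{X, Y} | X Y. X \<in> B \<and> Y \<in> B \<and> X \<noteq> Y \<and> (\<exists>x \<in> X. \<exists>y \<in> Y. adj G x y)}"

text \<open>\<nabla>_r(G): maximum edge density over nonempty depth-r shallow minors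
  (0 for the empty graph, which has none).\<close>
definition nabla :: "nat \<Rightarrow> 'a graph \<Rightarrow> real" where
  "nabla r G = Sup (insert 0 {real (card F) / real (card B) | B F.
       shallow_minor r G B F \<and> B \<noteq> {}})"

text \<open>Sub-exponential expansion: sup_{G\<in>C} \<nabla>_r(G) = 2^{o(r)}.\<close>
definition subexp_expansion :: "'a graph set \<Rightarrow> bool" where
  "subexp_expansion C \<longleftrightarrow> (\<forall>\<epsilon>>0. \<exists>R. \<forall>r\<ge>R. \<forall>G \<in> C. nabla r G \<le> 2 powr (\<epsilon> * real r))"

end

theory Submission
  imports Defs
begin

text \<open>Fix r < q and induct along a sequence of 2q-reductions, always placing the deleted
  vertices above all remaining ones in the order. The invariant is
  |WReach_s[v]| \<le> s + 1 + h(q, s) for all s \<le> r, where h(q, s) = \<lceil>log 2 (q / (q - s))\<rceil>.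
  A deleted vertex of degree at most one sees itself and what its neighbour sees at distance
  s - 1. The internal vertices of a deleted strict ear ys of length L \<ge> 2q are ordered
  ys!q < ys!1 < ... < ys!(q-1) < ys!(L-1) < ... < ys!(q+1). Paths of length at most s < L
  cannot cross the ear, so the old vertices see nothing new; a vertex ys!k with k < q sees the
  ear vertices behind it, possibly ys!q, and what the end ys!0 sees at distance s - k. The only
  expensive case, seeing both ys!q and ys!0, forces s - k \<le> 2s - q, and h(q, 2s - q) < h(q, s)
  pays for it. Finally h(q, r) \<le> 1 + \<lfloor>log 2 ((q - 1) / (q - r))\<rfloor> and h(2r, r) = 1.\<close>

subsection \<open>Paths\<close>

lemma adj_commute: "adj G u v = adj G v u"
  unfolding adj_def by (auto simp: insert_commute)

lemma mem_internal_iff: "w \<in> internal xs \<longleftrightarrow> (\<exists>i. 0 < i \<and> i < length xs - 1 \<and> w = xs ! i)"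
proof
  assume "w \<in> internal xs"
  then obtain j where j: "j < length (butlast (tl xs))" "w = butlast (tl xs) ! j"
    unfolding internal_def by (auto simp: in_set_conv_nth)
  then have "w = xs ! Suc j" by (simp add: nth_butlast nth_tl)
  then show "\<exists>i. 0 < i \<and> i < length xs - 1 \<and> w = xs ! i" using j(1)
    by (intro exI[of _ "Suc j"]) simp
next
  assume "\<exists>i. 0 < i \<and> i < length xs - 1 \<and> w = xs ! i"
  then obtain i where i: "0 < i" "i < length xs - 1" "w = xs ! i" by blast
  then have "butlast (tl xs) ! (i - 1) = w" by (simp add: nth_butlast nth_tl)
  moreover have "i - 1 < length (butlast (tl xs))" using i by simp
  ultimately show "w \<in> internal xs" unfolding internal_def by (metis nth_mem)
qed

lemma nth_mem_internal: "0 < k \<Longrightarrow> k < length zs - 1 \<Longrightarrow> zs ! k \<in> internal zs"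
  unfolding mem_internal_iff by (intro exI[of _ k]) simp

lemma internal_subset_set: "internal xs \<subseteq> set xs"
  unfolding internal_def by (cases xs) (auto dest: in_set_butlastD)

lemma internal_subset_verts: "is_path G xs \<Longrightarrow> internal xs \<subseteq> verts G"
  unfolding is_path_def using internal_subset_set[of xs] by (simp add: subset_trans)

lemma internal_rev: "internal (rev xs) = internal xs"
  unfolding internal_def by (metis butlast_rev butlast_tl rev_rev_ident set_rev)

lemma internal_drop_subset: "internal (drop k zs) \<subseteq> internal zs"
proof
  fix w assume "w \<in> internal (drop k zs)"
  then obtain i where i: "0 < i" "i < length (drop k zs) - 1" "w = drop k zs ! i"
    unfolding mem_internal_iff by blast
  have "zs ! (k + i) \<in> internal zs" using i by (intro nth_mem_internal) auto
  then show "w \<in> internal zs" using i by simp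
qed

lemma is_path_not_Nil: "is_path G xs \<Longrightarrow> xs \<noteq> []"
  unfolding is_path_def by simp

lemma is_path_adj: "is_path G xs \<Longrightarrow> Suc i < length xs \<Longrightarrow> adj G (xs ! i) (xs ! Suc i)"
  unfolding is_path_def by auto

lemma is_path_nth_in_verts: "is_path G xs \<Longrightarrow> i < length xs \<Longrightarrow> xs ! i \<in> verts G"
  unfolding is_path_def by auto

lemma is_path_nth_inj:
  "is_path G xs \<Longrightarrow> i < length xs \<Longrightarrow> j < length xs \<Longrightarrow> xs ! i = xs ! j \<Longrightarrow> i = j"
  unfolding is_path_def by (simp add: nth_eq_iff_index_eq)

lemma is_path_internal_neighbours:
  assumes "is_path G xs" "0 < j" "j < length xs - 1"
  shows "adj G (xs ! j) (xs ! (j - 1))" "adj G (xs ! j) (xs ! Suc j)" "xs ! (j - 1) \<noteq> xs ! Suc j"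
proof -
  show "adj G (xs ! j) (xs ! (j - 1))"
    using is_path_adj[OF assms(1), of "j - 1"] assms by (simp add: adj_commute)
  show "adj G (xs ! j) (xs ! Suc j)" using is_path_adj[OF assms(1), of j] assms by simp
  show "xs ! (j - 1) \<noteq> xs ! Suc j"
  proof
    assume "xs ! (j - 1) = xs ! Suc j"
    then have "j - 1 = Suc j" using is_path_nth_inj[OF assms(1), of "j - 1" "Suc j"] assms by simp
    then show False by simp
  qed
qed

lemma is_path_nth_internal_bounds:
  assumes "is_path G ys" "i < length ys" "ys ! i \<in> internal ys"
  shows "0 < i" "i < length ys - 1"
proof -
  obtain j where "0 < j" "j < length ys - 1" "ys ! i = ys ! j"
    using assms(3) unfolding mem_internal_iff by blast
  moreover have "i = j" using is_path_nth_inj[OF assms(1,2)] calculation by simp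
  ultimately show "0 < i" "i < length ys - 1" by simp_all
qed

lemma is_path_ends_not_internal:
  assumes "is_path G ys"
  shows "ys ! 0 \<notin> internal ys" "ys ! (length ys - 1) \<notin> internal ys"
  using is_path_nth_internal_bounds(1)[OF assms, of 0]
    is_path_nth_internal_bounds(2)[OF assms, of "length ys - 1"] is_path_not_Nil[OF assms]
  by auto

lemma is_path_rev: "is_path G xs \<Longrightarrow> is_path G (rev xs)"
  unfolding is_path_def
proof (intro conjI allI impI; (elim conjE)?)
  fix i assume a: "xs \<noteq> []" "distinct xs" "set xs \<subseteq> verts G"
    "\<forall>i. Suc i < length xs \<longrightarrow> adj G (xs ! i) (xs ! Suc i)" "Suc i < length (rev xs)"
  then have "adj G (xs ! (length xs - Suc (Suc i))) (xs ! Suc (length xs - Suc (Suc i)))"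
    by simp
  moreover have "Suc (length xs - Suc (Suc i)) = length xs - Suc i" using a(5) by simp
  ultimately show "adj G (rev xs ! i) (rev xs ! Suc i)" using a(5)
    by (simp add: rev_nth adj_commute)
qed auto

lemma is_path_drop: "is_path G zs \<Longrightarrow> k < length zs \<Longrightarrow> is_path G (drop k zs)"
  unfolding is_path_def by (auto dest: in_set_dropD)

lemma degree_internal_ge_2:
  assumes "finite (verts G)" "is_path G xs" "w \<in> internal xs"
  shows "degree G w \<ge> 2"
proof -
  obtain j where j: "0 < j" "j < length xs - 1" "w = xs ! j"
    using assms(3) unfolding mem_internal_iff by blast
  note nb = is_path_internal_neighbours[OF assms(2) j(1,2)]
  have "{xs ! (j - 1), xs ! Suc j} \<subseteq> {u \<in> verts G. adj G w u}"
    using nb j is_path_nth_in_verts[OF assms(2)] by auto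
  then have "card {xs ! (j - 1), xs ! Suc j} \<le> degree G w"
    unfolding degree_def by (rule card_mono[rotated]) (use assms(1) in auto)
  then show ?thesis using nb(3) by simp
qed

lemma verts_del_verts: "verts (del_verts G S) = verts G - S"
  by (simp add: del_verts_def verts_def)

lemma adj_del_verts: "adj (del_verts G S) x y \<longleftrightarrow> adj G x y \<and> x \<notin> S \<and> y \<notin> S"
  unfolding adj_def del_verts_def edges_def by auto

lemma is_path_del_verts: "is_path G xs \<Longrightarrow> set xs \<inter> S = {} \<Longrightarrow> is_path (del_verts G S) xs"
  unfolding is_path_def
  by (auto simp: verts_del_verts adj_del_verts) (meson Suc_lessD disjoint_iff nth_mem)+

lemma edges_del_verts: "edges (del_verts G S) = {e \<in> edges G. e \<inter> S = {}}"
  by (simp add: del_verts_def edges_def)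

lemma wf_graph_del_verts:
  assumes "wf_graph G"
  shows "wf_graph (del_verts G S)"
proof -
  have "e \<in> {{u, v} | u v. u \<in> verts G - S \<and> v \<in> verts G - S \<and> u \<noteq> v}"
    if "e \<in> edges G" "e \<inter> S = {}" for e
    using that assms unfolding wf_graph_def by blast
  then show ?thesis
    using assms unfolding wf_graph_def verts_del_verts edges_del_verts by auto
qed

subsection \<open>Paths meeting a strict ear\<close>

lemma strict_ear_is_path: "strict_ear G ys \<Longrightarrow> is_path G ys"
  unfolding strict_ear_def by simp

lemma strict_ear_neighbour:
  assumes "strict_ear G ys" "0 < i" "i < length ys - 1" "w \<in> verts G" "adj G (ys ! i) w"
  shows "w = ys ! (i - 1) \<or> w = ys ! Suc i"
proof (rule ccontr)
  assume c: "\<not> (w = ys ! (i - 1) \<or> w = ys ! Suc i)"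
  have p: "is_path G ys" using assms(1) by (rule strict_ear_is_path)
  have d: "degree G (ys ! i) = 2"
    using assms(1) nth_mem_internal[OF assms(2,3)] unfolding strict_ear_def by simp
  then have fin: "finite {u \<in> verts G. adj G (ys ! i) u}" unfolding degree_def
    by (metis card.infinite zero_neq_numeral)
  note nb = is_path_internal_neighbours[OF p assms(2,3)]
  have "{ys ! (i - 1), ys ! Suc i, w} \<subseteq> {u \<in> verts G. adj G (ys ! i) u}"
    using nb is_path_nth_in_verts[OF p] assms by auto
  then have "card {ys ! (i - 1), ys ! Suc i, w} \<le> 2"
    using card_mono[OF fin] d unfolding degree_def by metis
  moreover have "card {ys ! (i - 1), ys ! Suc i, w} = 3"
    using nb(3) c by (auto simp: card_insert_if)
  ultimately show False by simp
qed

lemma strict_ear_rev: "strict_ear G ys \<Longrightarrow> strict_ear G (rev ys)"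
  unfolding strict_ear_def using is_path_rev[of G ys]
  by (simp add: internal_rev hd_rev last_rev) metis

lemma path_follows_strict_ear:
  assumes e: "strict_ear G ys" and p: "is_path G xs"
    and h: "xs ! j = ys ! i" "Suc j < length xs" "Suc i < length ys" "xs ! Suc j = ys ! Suc i"
  shows "i + t < length ys \<Longrightarrow> j + t < length xs \<Longrightarrow> xs ! (j + t) = ys ! (i + t)"
proof -
  have claim: "i + Suc t < length ys \<longrightarrow> j + Suc t < length xs \<longrightarrow>
      xs ! (j + t) = ys ! (i + t) \<and> xs ! (j + Suc t) = ys ! (i + Suc t)" for t
  proof (induction t)
    case 0 then show ?case using h by simp
  next
    case (Suc t)
    show ?case
    proof (intro impI)
      assume l: "i + Suc (Suc t) < length ys" "j + Suc (Suc t) < length xs"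
      then have IH: "xs ! (j + t) = ys ! (i + t)" "xs ! (j + Suc t) = ys ! (i + Suc t)"
        using Suc by auto
      have "adj G (xs ! (j + Suc t)) (xs ! Suc (j + Suc t))" using is_path_adj[OF p] l by simp
      then have "adj G (ys ! (i + Suc t)) (xs ! (j + Suc (Suc t)))" using IH by simp
      moreover have "xs ! (j + Suc (Suc t)) \<in> verts G" using is_path_nth_in_verts[OF p] l by simp
      ultimately have "xs ! (j + Suc (Suc t)) = ys ! (i + Suc t - 1) \<or>
          xs ! (j + Suc (Suc t)) = ys ! Suc (i + Suc t)"
        using strict_ear_neighbour[OF e, of "i + Suc t"] l by simp
      moreover have "xs ! (j + Suc (Suc t)) \<noteq> xs ! (j + t)"
        using is_path_nth_inj[OF p, of "j + Suc (Suc t)" "j + t"] l by auto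
      ultimately show "xs ! (j + Suc t) = ys ! (i + Suc t) \<and>
          xs ! (j + Suc (Suc t)) = ys ! (i + Suc (Suc t))" using IH by auto
    qed
  qed
  assume "i + t < length ys" "j + t < length xs"
  then show ?thesis
  proof (cases t)
    case 0 then show ?thesis using h by simp
  next
    case (Suc t')
    then show ?thesis using claim[of t'] \<open>i + t < length ys\<close> \<open>j + t < length xs\<close> by auto
  qed
qed

lemma path_from_strict_ear_vertex:
  assumes e: "strict_ear G ys" and p: "is_path G zs"
    and k: "0 < k" "k < length ys - 1" and hz: "hd zs = ys ! k" and l: "1 < length zs"
  shows "(zs ! 1 = ys ! Suc k \<and> (\<forall>t. t < length zs \<and> k + t < length ys \<longrightarrow> zs ! t = ys ! (k + t)))
       \<or> (zs ! 1 = ys ! (k - 1) \<and> (\<forall>t. t < length zs \<and> t \<le> k \<longrightarrow> zs ! t = ys ! (k - t)))"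
proof -
  have zne: "zs \<noteq> []" using l by auto
  have z0: "zs ! 0 = ys ! k" using hz[unfolded hd_conv_nth[OF zne]] .
  have "adj G (zs ! 0) (zs ! 1)" using is_path_adj[OF p, of 0] l by simp
  moreover have "zs ! 1 \<in> verts G" using is_path_nth_in_verts[OF p] l by simp
  ultimately have "zs ! 1 = ys ! (k - 1) \<or> zs ! 1 = ys ! Suc k"
    using strict_ear_neighbour[OF e k] z0 by simp
  then show ?thesis
  proof
    assume a: "zs ! 1 = ys ! Suc k"
    have "\<forall>t. t < length zs \<and> k + t < length ys \<longrightarrow> zs ! t = ys ! (k + t)"
      using path_follows_strict_ear[OF e p, of 0 k] z0 a k l by auto
    then show ?thesis using a by blast
  next
    assume a: "zs ! 1 = ys ! (k - 1)"
    let ?L = "length ys - 1"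
    have e': "strict_ear G (rev ys)" using strict_ear_rev[OF e] .
    have r1: "rev ys ! (?L - k) = ys ! k" using k by (simp add: rev_nth)
    have ix: "length ys - Suc (Suc (length ys - Suc k)) = k - 1" using k by linarith
    have r2: "rev ys ! Suc (?L - k) = ys ! (k - 1)" using k
      by (simp add: rev_nth ix)
    have "\<forall>t. t < length zs \<and> t \<le> k \<longrightarrow> zs ! t = ys ! (k - t)"
    proof (intro allI impI)
      fix t assume t: "t < length zs \<and> t \<le> k"
      have "zs ! (0 + t) = rev ys ! (?L - k + t)"
        using path_follows_strict_ear[OF e' p, of 0 "?L - k" t] z0 a r1 r2 k l t by auto
      moreover have "?L - k + t < length ys" "length ys - Suc (?L - k + t) = k - t"
        using k t by linarith+
      ultimately show "zs ! t = ys ! (k - t)" by (simp add: rev_nth)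
    qed
    then show ?thesis using a by blast
  qed
qed

lemma path_leaving_strict_ear:
  assumes e: "strict_ear G ys" and p: "is_path G zs"
    and k: "0 < k" "k < length ys - 1" and hz: "hd zs = ys ! k" and l: "1 < length zs"
    and lz: "last zs \<notin> internal ys"
  shows "(zs ! 1 = ys ! Suc k \<and> length ys - 1 - k \<le> length zs - 1)
       \<or> (zs ! 1 = ys ! (k - 1) \<and> k \<le> length zs - 1)"
  using path_from_strict_ear_vertex[OF e p k hz l]
proof
  assume a: "zs ! 1 = ys ! Suc k \<and> (\<forall>t. t < length zs \<and> k + t < length ys \<longrightarrow> zs ! t = ys ! (k + t))"
  have "length ys - 1 - k \<le> length zs - 1"
  proof (rule ccontr)
    assume nt: "\<not> ?thesis"
    have "last zs = zs ! (length zs - 1)" using l by (intro last_conv_nth) auto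
    also have "\<dots> = ys ! (k + (length zs - 1))"
    proof -
      have "length zs - 1 < length zs \<and> k + (length zs - 1) < length ys" using l nt by linarith
      then show ?thesis using a by blast
    qed
    finally have "last zs = ys ! (k + (length zs - 1))" .
    moreover have "ys ! (k + (length zs - 1)) \<in> internal ys"
      using nt k l by (intro nth_mem_internal) auto
    ultimately show False using lz by simp
  qed
  then show ?thesis using a by blast
next
  assume a: "zs ! 1 = ys ! (k - 1) \<and> (\<forall>t. t < length zs \<and> t \<le> k \<longrightarrow> zs ! t = ys ! (k - t))"
  have "k \<le> length zs - 1"
  proof (rule ccontr)
    assume nt: "\<not> ?thesis"
    have "last zs = zs ! (length zs - 1)" using l by (intro last_conv_nth) auto
    also have "\<dots> = ys ! (k - (length zs - 1))"
    proof -
      have "length zs - 1 < length zs \<and> length zs - 1 \<le> k" using l nt by linarith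
      then show ?thesis using a by blast
    qed
    finally have "last zs = ys ! (k - (length zs - 1))" .
    moreover have "ys ! (k - (length zs - 1)) \<in> internal ys"
      using nt k l by (intro nth_mem_internal) auto
    ultimately show False using lz by simp
  qed
  then show ?thesis using a by blast
qed

lemma short_path_avoids_strict_ear:
  assumes e: "strict_ear G ys" and p: "is_path G xs"
    and h: "hd xs \<notin> internal ys" "last xs \<notin> internal ys" and l: "length xs < length ys"
  shows "set xs \<inter> internal ys = {}"
proof (rule ccontr)
  txt \<open>From an internal ear vertex xs!j, the two halves of xs leave the ear in opposite
    directions, so together they are at least as long as the ear.\<close>
  assume "set xs \<inter> internal ys \<noteq> {}"
  then obtain j where j: "j < length xs" "xs ! j \<in> internal ys"
    by (metis disjoint_iff in_set_conv_nth)
  then obtain i where i: "0 < i" "i < length ys - 1" "xs ! j = ys ! i"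
    unfolding mem_internal_iff by blast
  have xne: "xs \<noteq> []" using j by auto
  have j0: "j \<noteq> 0" using h(1) j(2) xne by (metis hd_conv_nth)
  have jn: "j \<noteq> length xs - 1" using h(2) j(2) xne by (metis last_conv_nth)
  define zs1 where "zs1 = drop j xs"
  have p1: "is_path G zs1" unfolding zs1_def using is_path_drop[OF p j(1)] .
  have h1: "hd zs1 = ys ! i" unfolding zs1_def using j(1) i(3) by (simp add: hd_drop_conv_nth)
  have l1: "1 < length zs1" unfolding zs1_def using j jn by simp
  have la1: "last zs1 \<notin> internal ys" unfolding zs1_def using h(2) j(1) by simp
  have z11: "zs1 ! 1 = xs ! Suc j" unfolding zs1_def using j jn by simp
  define zs2 where "zs2 = drop (length xs - Suc j) (rev xs)"
  have p2: "is_path G zs2"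
    unfolding zs2_def using is_path_drop[OF is_path_rev[OF p], of "length xs - Suc j"] j by simp
  have h2: "hd zs2 = ys ! i" unfolding zs2_def using j(1) i(3)
    by (simp add: hd_drop_conv_nth rev_nth)
  have l2: "1 < length zs2" unfolding zs2_def using j j0 by simp
  have la2: "last zs2 \<notin> internal ys" unfolding zs2_def using h(1) j(1) xne
    by (simp add: last_rev)
  have ix: "length xs - Suc (Suc (length xs - Suc j)) = j - 1" using j j0 by linarith
  have z21: "zs2 ! 1 = xs ! (j - 1)" unfolding zs2_def using j j0
    by (simp add: rev_nth ix)
  have ne: "xs ! Suc j \<noteq> xs ! (j - 1)"
  proof
    assume "xs ! Suc j = xs ! (j - 1)"
    then have "Suc j = j - 1" using is_path_nth_inj[OF p, of "Suc j" "j - 1"] j jn by simp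
    then show False by simp
  qed
  have len1: "length zs1 - 1 = length xs - 1 - j" unfolding zs1_def by simp
  have len2: "length zs2 - 1 = j" unfolding zs2_def using j by simp
  have A: "(xs ! Suc j = ys ! Suc i \<and> length ys - 1 - i \<le> length xs - 1 - j) \<or>
      (xs ! Suc j = ys ! (i - 1) \<and> i \<le> length xs - 1 - j)"
    using path_leaving_strict_ear[OF e p1 i(1,2) h1 l1 la1] unfolding z11 len1 .
  have B: "(xs ! (j - 1) = ys ! Suc i \<and> length ys - 1 - i \<le> j) \<or>
      (xs ! (j - 1) = ys ! (i - 1) \<and> i \<le> j)"
    using path_leaving_strict_ear[OF e p2 i(1,2) h2 l2 la2] unfolding z21 len2 .
  show False using A B ne l i j by auto
qed

subsection \<open>Weak reachability\<close>

lemma mem_WReach_iff: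
  "u \<in> WReach s G \<pi> v \<longleftrightarrow> u \<in> verts G \<and> \<pi> u \<le> \<pi> v \<and>
     (\<exists>zs. is_path G zs \<and> hd zs = v \<and> last zs = u \<and> length zs - 1 \<le> s \<and>
        (\<forall>w\<in>internal zs. \<pi> u < \<pi> w))"
proof -
  have rev: "is_path G (rev xs) \<and> hd (rev xs) = last xs \<and> last (rev xs) = hd xs \<and>
      length (rev xs) = length xs \<and> internal (rev xs) = internal xs" if "is_path G xs" for xs
    using that is_path_rev is_path_not_Nil by (simp add: hd_rev last_rev internal_rev)
  have "(\<exists>xs. is_path G xs \<and> hd xs = a \<and> last xs = b \<and> length xs - 1 \<le> s \<and> (\<forall>w\<in>internal xs. P w))
     \<Longrightarrow> (\<exists>zs. is_path G zs \<and> hd zs = b \<and> last zs = a \<and> length zs - 1 \<le> s \<and> (\<forall>w\<in>internal zs. P w))"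
    for a b P using rev by metis
  then show ?thesis unfolding WReach_def by blast
qed

lemma WReach_subset_verts: "WReach s G \<pi> v \<subseteq> verts G"
  unfolding WReach_def by (rule Collect_restrict)

lemma finite_WReach: "finite (verts G) \<Longrightarrow> finite (WReach s G \<pi> v)"
  by (rule finite_subset[OF WReach_subset_verts])

lemma WReach_cong:
  assumes agree: "\<And>x. x \<in> verts H \<Longrightarrow> \<pi> x = \<pi>' x" and v: "v \<in> verts H"
  shows "WReach s H \<pi> v = WReach s H \<pi>' v"
  unfolding WReach_def using agree v internal_subset_verts by (smt (verit) Collect_cong subsetD)

lemma WReach_witness_nth_le:
  fixes \<pi> :: "'a \<Rightarrow> nat"
  assumes "is_path G zs" "last zs = u" "\<pi> u \<le> \<pi> (hd zs)" "\<forall>w\<in>internal zs. \<pi> u < \<pi> w"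
    and "j < length zs"
  shows "\<pi> u \<le> \<pi> (zs ! j)"
proof -
  have zne: "zs \<noteq> []" using is_path_not_Nil[OF assms(1)] .
  consider "j = 0" | "j = length zs - 1" | "0 < j" "j < length zs - 1" using assms(5) by linarith
  then show ?thesis
  proof cases
    case 1
    then show ?thesis using assms(3) zne by (simp add: hd_conv_nth)
  next
    case 2
    then show ?thesis using assms(2) zne by (simp add: last_conv_nth)
  next
    case 3
    then show ?thesis using assms(4) nth_mem_internal[of j zs] by fastforce
  qed
qed

lemma mem_WReach_drop:
  assumes zs: "is_path G zs" "last zs = u" "length zs - 1 \<le> s" "\<pi> u \<le> \<pi> (hd zs)"
      "\<forall>w\<in>internal zs. \<pi> u < \<pi> w"
    and j: "j < length zs" and avoid: "set (drop j zs) \<inter> D = {}"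
  shows "u \<in> WReach (s - j) (del_verts G D) \<pi> (zs ! j)"
proof -
  have p: "is_path (del_verts G D) (drop j zs)"
    using is_path_drop[OF zs(1) j] avoid by (rule is_path_del_verts)
  have ends: "hd (drop j zs) = zs ! j" "last (drop j zs) = u"
    using j zs(2) by (simp_all add: hd_drop_conv_nth)
  have "u \<in> verts (del_verts G D)"
    using is_path_nth_in_verts[OF p, of "length (drop j zs) - 1"] ends(2) is_path_not_Nil[OF p]
    by (simp add: last_conv_nth)
  then show ?thesis
    unfolding mem_WReach_iff
    using p ends zs(3,5) internal_drop_subset[of j zs] WReach_witness_nth_le[OF zs(1,2,4,5) j]
    by (auto intro!: exI[of _ "drop j zs"])
qed

lemma card_WReach_le_del_verts:
  assumes fin: "finite (verts G)" and above: "\<And>x y. x \<in> D \<Longrightarrow> y \<in> verts G - D \<Longrightarrow> \<pi> y < \<pi> x"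
    and w: "w \<in> verts G - D"
    and avoid: "\<And>xs. is_path G xs \<Longrightarrow> hd xs \<notin> D \<Longrightarrow> last xs \<notin> D \<Longrightarrow> length xs - 1 \<le> s \<Longrightarrow>
      set xs \<inter> D = {}"
  shows "card (WReach s G \<pi> w) \<le> card (WReach s (del_verts G D) \<pi> w)"
proof (rule card_mono)
  show "finite (WReach s (del_verts G D) \<pi> w)"
    using fin by (intro finite_WReach) (simp add: verts_del_verts)
  show "WReach s G \<pi> w \<subseteq> WReach s (del_verts G D) \<pi> w"
  proof
    fix u assume "u \<in> WReach s G \<pi> w"
    then obtain xs where u: "u \<in> verts G" "\<pi> u \<le> \<pi> w" and xs: "is_path G xs" "hd xs = u"
      "last xs = w" "length xs - 1 \<le> s" "\<forall>v\<in>internal xs. \<pi> u < \<pi> v"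
      unfolding WReach_def by blast
    have "u \<notin> D" using above[of u w] u w by fastforce
    then have "is_path (del_verts G D) xs"
      using avoid[OF xs(1)] xs w by (intro is_path_del_verts) auto
    then show "u \<in> WReach s (del_verts G D) \<pi> w"
      unfolding WReach_def using u \<open>u \<notin> D\<close> xs by (auto simp: verts_del_verts)
  qed
qed

lemma extend_order_above:
  fixes \<pi>' \<sigma> :: "'a \<Rightarrow> nat"
  assumes fin: "finite (verts G)" and inj': "inj_on \<pi>' (verts (del_verts G D))"
    and inj: "inj_on \<sigma> D"
  obtains \<pi> where "inj_on \<pi> (verts G)" "\<And>x. x \<in> verts G - D \<Longrightarrow> \<pi> x = \<pi>' x"
    "\<And>x y. x \<in> D \<Longrightarrow> y \<in> verts G - D \<Longrightarrow> \<pi> y < \<pi> x"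
    "\<And>x y. x \<in> D \<Longrightarrow> y \<in> D \<Longrightarrow> \<sigma> x < \<sigma> y \<Longrightarrow> \<pi> x < \<pi> y"
proof -
  define N where "N = Suc (Max (\<pi>' ` verts (del_verts G D)))"
  have below: "\<pi>' y < N" if "y \<in> verts G - D" for y
    unfolding N_def using fin that by (simp add: verts_del_verts le_imp_less_Suc)
  define \<pi> where "\<pi> x = (if x \<in> D then N + \<sigma> x else \<pi>' x)" for x
  have above: "\<pi> y < \<pi> x" if "x \<in> D" "y \<in> verts G - D" for x y
    using below[OF that(2)] that unfolding \<pi>_def by simp
  have "inj_on \<pi> (verts G)"
  proof (rule inj_onI)
    fix x y assume xy: "x \<in> verts G" "y \<in> verts G" "\<pi> x = \<pi> y"
    then show "x = y"
      using above[of x y] above[of y x] inj inj' unfolding \<pi>_def inj_on_def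
      by (auto simp: verts_del_verts split: if_splits)
  qed
  then show thesis using that[of \<pi>] above unfolding \<pi>_def by auto
qed

text \<open>For s < q, log_excess q s = \<lceil>log 2 (q / (q - s))\<rceil>.\<close>

definition log_excess :: "nat \<Rightarrow> nat \<Rightarrow> nat" where
  "log_excess q s = (LEAST j. q \<le> 2 ^ j * (q - s))"

definition wreach_bound :: "nat \<Rightarrow> nat \<Rightarrow> nat" where
  "wreach_bound q s = s + 1 + log_excess q s"

lemma log_excess_exists: "s < q \<Longrightarrow> q \<le> 2 ^ q * (q - s)"
proof -
  assume "s < q"
  have "q < 2 ^ q" by (rule less_exp)
  moreover have "2 ^ q \<le> 2 ^ q * (q - s)" using \<open>s < q\<close> by simp
  ultimately show ?thesis by linarith
qed

lemma log_excess_spec: "s < q \<Longrightarrow> q \<le> 2 ^ log_excess q s * (q - s)"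
  unfolding log_excess_def by (rule LeastI_ex) (use log_excess_exists in blast)

lemma log_excess_le: "q \<le> 2 ^ j * (q - s) \<Longrightarrow> log_excess q s \<le> j"
  unfolding log_excess_def by (rule Least_le)

lemma log_excess_pos: "0 < s \<Longrightarrow> s < q \<Longrightarrow> 1 \<le> log_excess q s"
proof (rule ccontr)
  assume a: "0 < s" "s < q" "\<not> 1 \<le> log_excess q s"
  then have "log_excess q s = 0" by simp
  then have "q \<le> q - s" using log_excess_spec[OF a(2)] by simp
  then show False using a by simp
qed

lemma log_excess_mono: "s \<le> s' \<Longrightarrow> s' < q \<Longrightarrow> log_excess q s \<le> log_excess q s'"
proof -
  assume a: "s \<le> s'" "s' < q"
  have "q \<le> 2 ^ log_excess q s' * (q - s')" using log_excess_spec[OF a(2)] .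
  also have "\<dots> \<le> 2 ^ log_excess q s' * (q - s)" using a by (intro mult_le_mono2) simp
  finally show ?thesis by (rule log_excess_le)
qed

lemma log_excess_double_sub_less:
  "q \<le> 2 * s \<Longrightarrow> s < q \<Longrightarrow> log_excess q (2 * s - q) < log_excess q s"
proof -
  assume a: "q \<le> 2 * s" "s < q"
  have "1 \<le> log_excess q s" using log_excess_pos a by simp
  then obtain j where j: "log_excess q s = Suc j" by (cases "log_excess q s") auto
  have "q \<le> 2 ^ Suc j * (q - s)" using log_excess_spec[OF a(2)] j by simp
  also have "\<dots> = 2 ^ j * (q - (2 * s - q))" using a by (simp add: algebra_simps)
  finally have "log_excess q (2 * s - q) \<le> j" by (rule log_excess_le)
  then show ?thesis using j by simp
qed

lemma wreach_bound_pred_less: "0 < s \<Longrightarrow> s < q \<Longrightarrow> wreach_bound q (s - 1) < wreach_bound q s"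
  unfolding wreach_bound_def using log_excess_mono[of "s - 1" s q] by simp

lemma wreach_bound_ear_side:
  assumes "0 < k" "k < t" "q \<le> t" "s < q"
  shows "min s (k - 1) + 1 + (if t - k \<le> s then 1 else 0) +
    (if k \<le> s then wreach_bound q (s - k) else 0) \<le> wreach_bound q s"
proof (cases "k \<le> s")
  case reach_end: True
  then have m: "min s (k - 1) = k - 1" by simp
  show ?thesis
  proof (cases "t - k \<le> s")
    case reach_sink: True
    have "q \<le> 2 * s" using assms reach_end reach_sink by linarith
    then have "log_excess q (2 * s - q) < log_excess q s"
      using log_excess_double_sub_less assms by blast
    moreover have "log_excess q (s - k) \<le> log_excess q (2 * s - q)"
      using assms reach_sink by (intro log_excess_mono) linarith+
    ultimately show ?thesis using m reach_end reach_sink assms unfolding wreach_bound_def by simp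
  next
    case False
    have "log_excess q (s - k) \<le> log_excess q s"
      using assms by (intro log_excess_mono) linarith+
    then show ?thesis using m reach_end False assms unfolding wreach_bound_def by simp
  qed
next
  case False
  then have m: "min s (k - 1) = s" by simp
  have "0 < s \<Longrightarrow> 1 \<le> log_excess q s" using log_excess_pos assms by blast
  then show ?thesis using m False assms unfolding wreach_bound_def by auto
qed

lemma log_excess_le_floor_log:
  assumes "0 < r" "r < q"
  shows "int (log_excess q r) \<le> 1 + \<lfloor>log 2 (real (q - 1) / real (q - r))\<rfloor>"
proof -
  have "1 \<le> log_excess q r" using log_excess_pos assms by blast
  then obtain j where j: "log_excess q r = Suc j" by (cases "log_excess q r") auto
  have "\<not> q \<le> 2 ^ j * (q - r)"
  proof
    assume "q \<le> 2 ^ j * (q - r)"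
    then have "log_excess q r \<le> j" by (rule log_excess_le)
    then show False using j by simp
  qed
  then have n: "2 ^ j * (q - r) \<le> q - 1" by linarith
  have "real (2 ^ j * (q - r)) \<le> real (q - 1)" using n by (simp only: of_nat_le_iff)
  then have n2: "2 ^ j * real (q - r) \<le> real (q - 1)" by simp
  have pos: "0 < real (q - r)" using assms by simp
  have n3: "2 ^ j \<le> real (q - 1) / real (q - r)" using n2 pos by (simp add: pos_le_divide_eq)
  have xpos: "0 < real (q - 1) / real (q - r)" using assms pos by simp
  have "real j \<le> log 2 (real (q - 1) / real (q - r))"
    using n3 xpos by (simp add: le_log_iff powr_realpow)
  then have "int j \<le> \<lfloor>log 2 (real (q - 1) / real (q - r))\<rfloor>" by (simp add: le_floor_iff)
  then show ?thesis using j by simp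
qed

lemma log_excess_double: "0 < r \<Longrightarrow> log_excess (2 * r) r = 1"
proof -
  assume r: "0 < r"
  have "log_excess (2 * r) r \<le> 1" by (rule log_excess_le) simp
  moreover have "1 \<le> log_excess (2 * r) r" using log_excess_pos[of r "2 * r"] r by simp
  ultimately show ?thesis by simp
qed

subsection \<open>Deleting a vertex of degree at most one\<close>

definition wreach_bounded :: "nat \<Rightarrow> nat \<Rightarrow> 'a graph \<Rightarrow> ('a \<Rightarrow> nat) \<Rightarrow> bool" where
  "wreach_bounded q r G \<pi> \<longleftrightarrow> inj_on \<pi> (verts G) \<and>
     (\<forall>v\<in>verts G. \<forall>s\<le>r. card (WReach s G \<pi> v) \<le> wreach_bound q s)"

lemma WReach_subset_neighbours:
  assumes v: "v \<in> verts G"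
  shows "WReach s G \<pi> v \<subseteq> insert v (if s = 0 then {} else
           \<Union>x\<in>{u \<in> verts G. adj G v u}. WReach (s - 1) (del_verts G {v}) \<pi> x)"
proof
  fix u assume "u \<in> WReach s G \<pi> v"
  then obtain zs where u: "\<pi> u \<le> \<pi> v" and zs: "is_path G zs" "hd zs = v"
    "last zs = u" "length zs - 1 \<le> s" "\<forall>w\<in>internal zs. \<pi> u < \<pi> w"
    unfolding mem_WReach_iff by blast
  have zne: "zs \<noteq> []" using is_path_not_Nil[OF zs(1)] .
  show "u \<in> insert v (if s = 0 then {} else
           \<Union>x\<in>{u \<in> verts G. adj G v u}. WReach (s - 1) (del_verts G {v}) \<pi> x)"
  proof (cases "length zs = 1")
    case True
    then have "u = v" using zs(2,3) zne by (cases zs) auto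
    then show ?thesis by simp
  next
    case False
    then have l: "1 < length zs" using zne by (cases zs) auto
    have z0: "zs ! 0 = v" using zs(2) zne by (simp add: hd_conv_nth)
    have "set (drop 1 zs) \<inter> {v} = {}"
      using zs(1,2) zne unfolding is_path_def by (cases zs) auto
    then have "u \<in> WReach (s - 1) (del_verts G {v}) \<pi> (zs ! 1)"
      using mem_WReach_drop[OF zs(1,3,4) _ zs(5) l] u zs(2) by simp
    moreover have "adj G v (zs ! 1)" using is_path_adj[OF zs(1), of 0] l z0 by simp
    moreover have "zs ! 1 \<in> verts G" using is_path_nth_in_verts[OF zs(1)] l by simp
    moreover have "s \<noteq> 0" using l zs(4) by simp
    ultimately show ?thesis by auto
  qed
qed

lemma card_WReach_low_degree:
  assumes fin: "finite (verts G)" and v: "v \<in> verts G" and deg: "degree G v \<le> 1"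
    and sq: "s < q"
    and old: "\<And>x s'. x \<in> verts G - {v} \<Longrightarrow> s' \<le> s \<Longrightarrow>
      card (WReach s' (del_verts G {v}) \<pi> x) \<le> wreach_bound q s'"
  shows "card (WReach s G \<pi> v) \<le> wreach_bound q s"
proof -
  let ?N = "{u \<in> verts G. adj G v u}"
  have finN: "finite ?N" using fin by simp
  have cN: "card ?N \<le> 1" using deg unfolding degree_def .
  have fin': "finite (WReach (s - 1) (del_verts G {v}) \<pi> x)" for x
    using fin by (intro finite_WReach) (simp add: verts_del_verts)
  show ?thesis
  proof (cases "s = 0 \<or> ?N = {}")
    case True
    then have "WReach s G \<pi> v \<subseteq> {v}"
      using WReach_subset_neighbours[OF v, of s \<pi>] by (cases "s = 0") auto
    then have "card (WReach s G \<pi> v) \<le> 1" using card_mono[of "{v}"] by fastforce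
    then show ?thesis unfolding wreach_bound_def by simp
  next
    case False
    then obtain x where x: "?N = {x}" using cN finN
      by (metis (no_types, lifting) card_0_eq card_1_singletonE le_Suc_eq le_zero_eq One_nat_def)
    have xv: "x \<in> verts G - {v}" using x unfolding adj_def by auto
    have "WReach s G \<pi> v \<subseteq> insert v (WReach (s - 1) (del_verts G {v}) \<pi> x)"
      using WReach_subset_neighbours[OF v, of s \<pi>] False x by simp
    then have "card (WReach s G \<pi> v) \<le> card (insert v (WReach (s - 1) (del_verts G {v}) \<pi> x))"
      using fin' by (intro card_mono) auto
    also have "\<dots> \<le> 1 + card (WReach (s - 1) (del_verts G {v}) \<pi> x)"
      using fin' by (simp add: card_insert_if)
    also have "\<dots> \<le> 1 + wreach_bound q (s - 1)" using old[OF xv, of "s - 1"] by simp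
    also have "\<dots> \<le> wreach_bound q s" using wreach_bound_pred_less[of s q] False sq by simp
    finally show ?thesis .
  qed
qed

lemma path_avoids_low_degree_vertex:
  assumes fin: "finite (verts G)" and deg: "degree G v \<le> 1" and p: "is_path G xs"
    and ends: "hd xs \<noteq> v" "last xs \<noteq> v"
  shows "v \<notin> set xs"
proof
  assume "v \<in> set xs"
  then obtain j where j: "j < length xs" "xs ! j = v" by (auto simp: in_set_conv_nth)
  have "0 < j" using ends(1) j is_path_not_Nil[OF p] by (cases j) (auto simp: hd_conv_nth)
  moreover have "j < length xs - 1"
    using ends(2) j is_path_not_Nil[OF p] by (cases "j = length xs - 1") (auto simp: last_conv_nth)
  ultimately have "v \<in> internal xs" using j(2) nth_mem_internal by blast
  then show False using degree_internal_ge_2[OF fin p] deg by fastforce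
qed

lemma wreach_bounded_del_low_degree:
  assumes wf: "wf_graph G" and v: "v \<in> verts G" and deg: "degree G v \<le> 1" and rq: "r < q"
    and bounded: "wreach_bounded q r (del_verts G {v}) \<pi>'"
  shows "\<exists>\<pi>. wreach_bounded q r G \<pi>"
proof -
  let ?G' = "del_verts G {v}"
  have fin: "finite (verts G)" using wf by (simp add: wf_graph_def)
  have inj': "inj_on \<pi>' (verts ?G')" using bounded unfolding wreach_bounded_def by blast
  have inj_v: "inj_on (\<lambda>_. 0 :: nat) {v}" by simp
  obtain \<pi> where inj: "inj_on \<pi> (verts G)" and agree: "\<And>x. x \<in> verts G - {v} \<Longrightarrow> \<pi> x = \<pi>' x"
    and above: "\<And>x y. x \<in> {v} \<Longrightarrow> y \<in> verts G - {v} \<Longrightarrow> \<pi> y < \<pi> x"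
    using extend_order_above[OF fin inj' inj_v] by metis
  have old: "card (WReach s ?G' \<pi> x) \<le> wreach_bound q s" if "x \<in> verts G - {v}" "s \<le> r" for x s
    using bounded that WReach_cong[of ?G' \<pi> \<pi>' x s] agree
    unfolding wreach_bounded_def by (simp add: verts_del_verts)
  have "card (WReach s G \<pi> w) \<le> wreach_bound q s" if w: "w \<in> verts G" and s: "s \<le> r" for w s
  proof (cases "w = v")
    case True
    then show ?thesis using card_WReach_low_degree[OF fin v deg, of s q \<pi>] old s rq by simp
  next
    case False
    have "card (WReach s G \<pi> w) \<le> card (WReach s ?G' \<pi> w)"
      using path_avoids_low_degree_vertex[OF fin deg] above w False
      by (intro card_WReach_le_del_verts[OF fin]) auto
    also have "\<dots> \<le> wreach_bound q s" using old w s False by simp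
    finally show ?thesis .
  qed
  then show ?thesis using inj unfolding wreach_bounded_def by blast
qed

subsection \<open>Deleting a long strict ear\<close>

lemma mem_WReach_del_strict_ear:
  fixes \<pi> :: "'a \<Rightarrow> nat"
  assumes e: "strict_ear G ys"
    and above: "\<And>x y. x \<in> internal ys \<Longrightarrow> y \<in> verts G - internal ys \<Longrightarrow> \<pi> y < \<pi> x"
    and zs: "is_path G zs" "last zs = u" "length zs - 1 \<le> s" "\<pi> u \<le> \<pi> (hd zs)"
      "\<forall>w\<in>internal zs. \<pi> u < \<pi> w"
    and k: "k < length zs" "zs ! k = ys ! 0" and short: "s < length ys - 1"
  shows "u \<in> WReach (s - k) (del_verts G (internal ys)) \<pi> (ys ! 0)"
proof -
  have py: "is_path G ys" using e by (rule strict_ear_is_path)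
  have start: "ys ! 0 \<in> verts G - internal ys"
    using is_path_ends_not_internal[OF py] is_path_nth_in_verts[OF py, of 0] is_path_not_Nil[OF py]
    by auto
  have "u \<notin> internal ys"
    using WReach_witness_nth_le[OF zs(1,2,4,5) k(1)] k(2) above[of u "ys ! 0"] start by force
  then have "set (drop k zs) \<inter> internal ys = {}"
    using short_path_avoids_strict_ear[OF e is_path_drop[OF zs(1) k(1)]] start k zs(2,3) short
    by (simp add: hd_drop_conv_nth)
  then show ?thesis using mem_WReach_drop[OF zs k(1)] k(2) by simp
qed

lemma WReach_ear_side_subset:
  assumes e: "strict_ear G ys" and t: "0 < t" "t < length ys - 1" and k: "0 < k" "k < t"
    and up: "\<And>i j. 0 < i \<Longrightarrow> i < j \<Longrightarrow> j < t \<Longrightarrow> \<pi> (ys ! i) < \<pi> (ys ! j)"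
    and sink: "\<And>i. 0 < i \<Longrightarrow> i < length ys - 1 \<Longrightarrow> i \<noteq> t \<Longrightarrow> \<pi> (ys ! t) < \<pi> (ys ! i)"
    and above: "\<And>x y. x \<in> internal ys \<Longrightarrow> y \<in> verts G - internal ys \<Longrightarrow> \<pi> y < \<pi> x"
    and sl: "s < length ys - 1 - t"
  shows "WReach s G \<pi> (ys ! k) \<subseteq> (\<lambda>i. ys ! i) ` {k - min s (k - 1)..k}
     \<union> (if t - k \<le> s then {ys ! t} else {})
     \<union> (if k \<le> s then WReach (s - k) (del_verts G (internal ys)) \<pi> (ys ! 0) else {})"
    (is "_ \<subseteq> ?R")
proof
  fix u assume "u \<in> WReach s G \<pi> (ys ! k)"
  then obtain zs where u: "\<pi> u \<le> \<pi> (ys ! k)" and zs: "is_path G zs" "hd zs = ys ! k"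
    "last zs = u" "length zs - 1 \<le> s" "\<forall>w\<in>internal zs. \<pi> u < \<pi> w"
    unfolding mem_WReach_iff by blast
  define n where "n = length zs - 1"
  have ln: "n < length zs" and un: "u = zs ! n"
    using zs(3) is_path_not_Nil[OF zs(1)] unfolding n_def by (simp_all add: last_conv_nth)
  have seen: "\<pi> u \<le> \<pi> (zs ! j)" if "j < length zs" for j
    using WReach_witness_nth_le[OF zs(1,3)] zs(2,5) u that by simp
  show "u \<in> ?R"
  proof (cases "n = 0")
    case True
    then show ?thesis using un zs(2) is_path_not_Nil[OF zs(1)] by (simp add: hd_conv_nth)
  next
    case False
    then have "1 < length zs" unfolding n_def by simp
    from path_from_strict_ear_vertex[OF e zs(1) k(1) _ zs(2) this] t k
    consider (forward) "\<forall>j. j < length zs \<and> k + j < length ys \<longrightarrow> zs ! j = ys ! (k + j)"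
      | (backward) "\<forall>j. j < length zs \<and> j \<le> k \<longrightarrow> zs ! j = ys ! (k - j)"
      by force
    then show ?thesis
    proof cases
      case forward
      have kn: "k + n < length ys - 1" using sl zs(4) k unfolding n_def by linarith
      have uk: "u = ys ! (k + n)" using forward ln kn un by simp
      have "\<not> k + n < t" using up[of k "k + n"] k False u uk by auto
      moreover have "\<not> t < k + n"
      proof
        assume "t < k + n"
        then have tk: "t - k < length zs" using ln by linarith
        then have "zs ! (t - k) = ys ! t" using forward k t by auto
        then have "\<pi> u \<le> \<pi> (ys ! t)" using seen[OF tk] by simp
        moreover have "\<pi> (ys ! t) < \<pi> u" using sink[of "k + n"] \<open>t < k + n\<close> kn uk k by simp
        ultimately show False by simp
      qed
      ultimately show ?thesis using uk zs(4) unfolding n_def by simp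
    next
      case backward
      show ?thesis
      proof (cases "n < k")
        case True
        then have "u = ys ! (k - n)" using backward ln un by simp
        moreover have "k - n \<in> {k - min s (k - 1)..k}" using True zs(4) unfolding n_def by auto
        ultimately show ?thesis by blast
      next
        case False
        have kz: "k < length zs" using False ln by simp
        have "zs ! k = ys ! 0" using backward kz by simp
        then have "u \<in> WReach (s - k) (del_verts G (internal ys)) \<pi> (ys ! 0)"
          using mem_WReach_del_strict_ear[OF e above zs(1,3,4) _ zs(5) kz] u zs(2) t sl by simp
        then show ?thesis using False zs(4) unfolding n_def by simp
      qed
    qed
  qed
qed

lemma WReach_ear_sink_subset:
  assumes e: "strict_ear G ys" and t: "0 < t" "t < length ys - 1"
    and sink: "\<And>i. 0 < i \<Longrightarrow> i < length ys - 1 \<Longrightarrow> i \<noteq> t \<Longrightarrow> \<pi> (ys ! t) < \<pi> (ys ! i)"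
    and sl: "s < length ys - 1 - t" "s < t"
  shows "WReach s G \<pi> (ys ! t) \<subseteq> {ys ! t}"
proof
  fix u assume "u \<in> WReach s G \<pi> (ys ! t)"
  then obtain zs where u: "\<pi> u \<le> \<pi> (ys ! t)" and zs: "is_path G zs" "hd zs = ys ! t"
    "last zs = u" "length zs - 1 \<le> s"
    unfolding mem_WReach_iff by blast
  define n where "n = length zs - 1"
  have ln: "n < length zs" and un: "u = zs ! n"
    using zs(3) is_path_not_Nil[OF zs(1)] unfolding n_def by (simp_all add: last_conv_nth)
  show "u \<in> {ys ! t}"
  proof (cases "n = 0")
    case True
    then show ?thesis using un zs(2) is_path_not_Nil[OF zs(1)] by (simp add: hd_conv_nth)
  next
    case False
    then have "1 < length zs" unfolding n_def by simp
    from path_from_strict_ear_vertex[OF e zs(1) t zs(2) this]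
    consider (forward) "\<forall>j. j < length zs \<and> t + j < length ys \<longrightarrow> zs ! j = ys ! (t + j)"
      | (backward) "\<forall>j. j < length zs \<and> j \<le> t \<longrightarrow> zs ! j = ys ! (t - j)"
      by blast
    then show ?thesis
    proof cases
      case forward
      have "t + n < length ys - 1" using sl zs(4) unfolding n_def by linarith
      moreover have "\<pi> (ys ! t) < \<pi> (ys ! (t + n))" using calculation False t by (intro sink) auto
      ultimately show ?thesis using forward ln un u by simp
    next
      case backward
      have "n < t" using sl zs(4) unfolding n_def by linarith
      moreover have "\<pi> (ys ! t) < \<pi> (ys ! (t - n))" using calculation False t by (intro sink) auto
      ultimately show ?thesis using backward ln un u by simp
    qed
  qed
qed

lemma card_WReach_ear_side:
  assumes e: "strict_ear G ys" and t: "0 < t" "t < length ys - 1" and k: "0 < k" "k < t"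
    and up: "\<And>i j. 0 < i \<Longrightarrow> i < j \<Longrightarrow> j < t \<Longrightarrow> \<pi> (ys ! i) < \<pi> (ys ! j)"
    and sink: "\<And>i. 0 < i \<Longrightarrow> i < length ys - 1 \<Longrightarrow> i \<noteq> t \<Longrightarrow> \<pi> (ys ! t) < \<pi> (ys ! i)"
    and above: "\<And>x y. x \<in> internal ys \<Longrightarrow> y \<in> verts G - internal ys \<Longrightarrow> \<pi> y < \<pi> x"
    and sl: "s < length ys - 1 - t"
    and fin: "finite (verts G)" and qt: "q \<le> t" and sq: "s < q"
    and start: "k \<le> s \<Longrightarrow>
      card (WReach (s - k) (del_verts G (internal ys)) \<pi> (ys ! 0)) \<le> wreach_bound q (s - k)"
  shows "card (WReach s G \<pi> (ys ! k)) \<le> wreach_bound q s"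
proof -
  let ?A = "(\<lambda>i. ys ! i) ` {k - min s (k - 1)..k}"
  let ?B = "(if t - k \<le> s then {ys ! t} else {})"
  let ?C = "(if k \<le> s then WReach (s - k) (del_verts G (internal ys)) \<pi> (ys ! 0) else {})"
  have fin': "finite (verts (del_verts G (internal ys)))" using fin by (simp add: verts_del_verts)
  have finC: "finite ?C" using finite_WReach[OF fin'] by simp
  have cA: "card ?A \<le> min s (k - 1) + 1"
  proof -
    have "card ?A \<le> card {k - min s (k - 1)..k}" by (rule card_image_le) simp
    also have "\<dots> = min s (k - 1) + 1" using k by simp
    finally show ?thesis .
  qed
  have cB: "card ?B \<le> (if t - k \<le> s then 1 else 0)" by simp
  have cC: "card ?C \<le> (if k \<le> s then wreach_bound q (s - k) else 0)" using start by simp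
  have "card (WReach s G \<pi> (ys ! k)) \<le> card (?A \<union> ?B \<union> ?C)"
    using WReach_ear_side_subset[where \<pi> = \<pi>, OF e t k up sink above sl] finC
    by (intro card_mono) auto
  also have "\<dots> \<le> card ?A + card ?B + card ?C"
    by (meson card_Un_le add_le_mono order_trans le_refl)
  also have "\<dots> \<le> min s (k - 1) + 1 + (if t - k \<le> s then 1 else 0) +
      (if k \<le> s then wreach_bound q (s - k) else 0)"
    using cA cB cC by linarith
  also have "\<dots> \<le> wreach_bound q s" using wreach_bound_ear_side[OF k(1) k(2) qt sq] .
  finally show ?thesis .
qed

lemma card_WReach_ear_internal:
  assumes e: "strict_ear G ys" and fin: "finite (verts G)"
    and t: "q \<le> t" "q \<le> length ys - 1 - t" and sq: "s < q"
    and up: "\<And>i j. 0 < i \<Longrightarrow> i < j \<Longrightarrow> j < t \<Longrightarrow> \<pi> (ys ! i) < \<pi> (ys ! j)"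
    and down: "\<And>i j. t < i \<Longrightarrow> i < j \<Longrightarrow> j < length ys - 1 \<Longrightarrow> \<pi> (ys ! j) < \<pi> (ys ! i)"
    and sink: "\<And>i. 0 < i \<Longrightarrow> i < length ys - 1 \<Longrightarrow> i \<noteq> t \<Longrightarrow> \<pi> (ys ! t) < \<pi> (ys ! i)"
    and above: "\<And>x y. x \<in> internal ys \<Longrightarrow> y \<in> verts G - internal ys \<Longrightarrow> \<pi> y < \<pi> x"
    and old: "\<And>x s'. x \<in> verts G - internal ys \<Longrightarrow> s' \<le> s \<Longrightarrow>
      card (WReach s' (del_verts G (internal ys)) \<pi> x) \<le> wreach_bound q s'"
    and k: "0 < k" "k < length ys - 1"
  shows "card (WReach s G \<pi> (ys ! k)) \<le> wreach_bound q s"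
proof -
  define L where "L = length ys - 1"
  have py: "is_path G ys" using e by (rule strict_ear_is_path)
  have t0: "0 < t" "t < length ys - 1" using t sq by linarith+
  have "0 < length ys" "L < length ys" using k unfolding L_def by auto
  then have ends: "ys ! 0 \<in> verts G - internal ys" "ys ! L \<in> verts G - internal ys"
    using is_path_ends_not_internal[OF py] is_path_nth_in_verts[OF py] unfolding L_def by auto
  consider "k < t" | "k = t" | "t < k" by linarith
  then show ?thesis
  proof cases
    case 1
    show ?thesis
      by (rule card_WReach_ear_side[where \<pi> = \<pi>, OF e t0 k(1) 1 up sink above _ fin t(1) sq])
        (use t sq old[OF ends(1)] in auto)
  next
    case 2
    have "WReach s G \<pi> (ys ! t) \<subseteq> {ys ! t}"
      by (rule WReach_ear_sink_subset[where \<pi> = \<pi>, OF e t0 sink]) (use t sq in linarith)+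
    then have "card (WReach s G \<pi> (ys ! t)) \<le> 1" using card_mono[of "{ys ! t}"] by fastforce
    then show ?thesis using 2 unfolding wreach_bound_def by simp
  next
    case 3
    define zs where "zs = rev ys"
    have ez: "strict_ear G zs" unfolding zs_def using strict_ear_rev[OF e] .
    have lzs: "length zs - 1 = L" unfolding zs_def L_def by simp
    have izs: "internal zs = internal ys" unfolding zs_def by (rule internal_rev)
    have zs_nth: "zs ! i = ys ! (L - i)" if "i \<le> L" for i
      using that k unfolding zs_def L_def by (simp add: rev_nth)
    have "card (WReach s G \<pi> (zs ! (L - k))) \<le> wreach_bound q s"
    proof (rule card_WReach_ear_side[OF ez, of "L - t" "L - k" \<pi> s])
      show "0 < L - t" "L - t < length zs - 1" "0 < L - k" "L - k < L - t"
        using t0 k 3 lzs unfolding L_def by linarith+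
      show "\<pi> (zs ! i) < \<pi> (zs ! j)" if "0 < i" "i < j" "j < L - t" for i j
        using down[of "L - j" "L - i"] that zs_nth unfolding L_def by simp
      show "\<pi> (zs ! (L - t)) < \<pi> (zs ! i)" if "0 < i" "i < length zs - 1" "i \<noteq> L - t" for i
        using sink[of "L - i"] that zs_nth lzs t0 unfolding L_def by auto
      show "\<pi> y < \<pi> x" if "x \<in> internal zs" "y \<in> verts G - internal zs" for x y
        using above that unfolding izs by blast
      show "s < length zs - 1 - (L - t)" "finite (verts G)" "q \<le> L - t" "s < q"
        using t sq fin lzs unfolding L_def by auto
      show "card (WReach (s - (L - k)) (del_verts G (internal zs)) \<pi> (zs ! 0))
          \<le> wreach_bound q (s - (L - k))"
        using old[OF ends(2)] zs_nth[of 0] unfolding izs by simp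
    qed
    then show ?thesis using zs_nth[of "L - k"] k unfolding L_def by simp
  qed
qed

definition ear_rank :: "nat \<Rightarrow> nat \<Rightarrow> nat \<Rightarrow> nat" where
  "ear_rank q L i = (if i < q then 2 * i else if i = q then 0 else 2 * (L - i) + 1)"

lemma ear_rank_inj:
  assumes "ear_rank q L i = ear_rank q L j" "0 < i" "i < L" "0 < j" "j < L"
  shows "i = j"
  using assms unfolding ear_rank_def
  by (split if_split_asm; split if_split_asm; split if_split_asm; split if_split_asm; presburger)

lemma exists_ear_order:
  fixes \<pi>' :: "'a \<Rightarrow> nat"
  assumes fin: "finite (verts G)" and e: "strict_ear G ys"
    and q: "0 < q" "2 * q \<le> length ys - 1"
    and inj': "inj_on \<pi>' (verts (del_verts G (internal ys)))"
  obtains \<pi> where "inj_on \<pi> (verts G)" "\<And>x. x \<in> verts G - internal ys \<Longrightarrow> \<pi> x = \<pi>' x"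
    "\<And>x y. x \<in> internal ys \<Longrightarrow> y \<in> verts G - internal ys \<Longrightarrow> \<pi> y < \<pi> x"
    "\<And>i j. 0 < i \<Longrightarrow> i < j \<Longrightarrow> j < q \<Longrightarrow> \<pi> (ys ! i) < \<pi> (ys ! j)"
    "\<And>i j. q < i \<Longrightarrow> i < j \<Longrightarrow> j < length ys - 1 \<Longrightarrow> \<pi> (ys ! j) < \<pi> (ys ! i)"
    "\<And>i. 0 < i \<Longrightarrow> i < length ys - 1 \<Longrightarrow> i \<noteq> q \<Longrightarrow> \<pi> (ys ! q) < \<pi> (ys ! i)"
proof -
  let ?D = "internal ys"
  define L where "L = length ys - 1"
  have dys: "distinct ys" using strict_ear_is_path[OF e] unfolding is_path_def by simp
  define idx where "idx x = (THE i. i < length ys \<and> ys ! i = x)" for x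
  have idx: "idx (ys ! i) = i" if "i < length ys" for i
    unfolding idx_def using that nth_eq_iff_index_eq[OF dys] by (intro the_equality) auto
  have D_iff: "x \<in> ?D \<longleftrightarrow> (\<exists>i. 0 < i \<and> i < L \<and> x = ys ! i)" for x
    unfolding mem_internal_iff L_def ..
  have "inj_on (ear_rank q L \<circ> idx) ?D"
  proof (rule inj_onI)
    fix x y
    assume "x \<in> ?D" "y \<in> ?D" "(ear_rank q L \<circ> idx) x = (ear_rank q L \<circ> idx) y"
    then obtain i j where "0 < i" "i < L" "x = ys ! i" "0 < j" "j < L" "y = ys ! j"
      "ear_rank q L i = ear_rank q L j"
      unfolding D_iff L_def using idx by fastforce
    then show "x = y" using ear_rank_inj[of q L i j] by auto
  qed
  then obtain \<pi> where inj: "inj_on \<pi> (verts G)"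
    and agree: "\<And>x. x \<in> verts G - ?D \<Longrightarrow> \<pi> x = \<pi>' x"
    and above: "\<And>x y. x \<in> ?D \<Longrightarrow> y \<in> verts G - ?D \<Longrightarrow> \<pi> y < \<pi> x"
    and ranked: "\<And>x y. x \<in> ?D \<Longrightarrow> y \<in> ?D \<Longrightarrow>
      (ear_rank q L \<circ> idx) x < (ear_rank q L \<circ> idx) y \<Longrightarrow> \<pi> x < \<pi> y"
    by (rule extend_order_above[OF fin inj']) (rule that)
  have by_rank: "\<pi> (ys ! i) < \<pi> (ys ! j)"
    if "0 < i" "i < L" "0 < j" "j < L" "ear_rank q L i < ear_rank q L j" for i j
    using ranked[of "ys ! i" "ys ! j"] idx that unfolding D_iff L_def by auto
  show thesis
  proof (rule that[OF inj agree above])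
    show "\<pi> (ys ! i) < \<pi> (ys ! j)" if "0 < i" "i < j" "j < q" for i j
      using by_rank[of i j] that q unfolding ear_rank_def L_def by simp
    show "\<pi> (ys ! j) < \<pi> (ys ! i)" if "q < i" "i < j" "j < length ys - 1" for i j
      using by_rank[of j i] that unfolding ear_rank_def L_def by simp
    show "\<pi> (ys ! q) < \<pi> (ys ! i)" if "0 < i" "i < length ys - 1" "i \<noteq> q" for i
      using by_rank[of q i] that q unfolding ear_rank_def L_def by auto
  qed
qed

lemma wreach_bounded_del_strict_ear:
  assumes wf: "wf_graph G" and e: "strict_ear G ys" and long: "2 * q \<le> length ys - 1"
    and rq: "r < q" and bounded: "wreach_bounded q r (del_verts G (internal ys)) \<pi>'"
  shows "\<exists>\<pi>. wreach_bounded q r G \<pi>"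
proof -
  let ?D = "internal ys"
  let ?G' = "del_verts G ?D"
  have fin: "finite (verts G)" using wf by (simp add: wf_graph_def)
  have inj': "inj_on \<pi>' (verts ?G')" using bounded unfolding wreach_bounded_def by blast
  have q0: "0 < q" using rq by simp
  obtain \<pi> where inj: "inj_on \<pi> (verts G)" and agree: "\<And>x. x \<in> verts G - ?D \<Longrightarrow> \<pi> x = \<pi>' x"
    and above: "\<And>x y. x \<in> ?D \<Longrightarrow> y \<in> verts G - ?D \<Longrightarrow> \<pi> y < \<pi> x"
    and up: "\<And>i j. 0 < i \<Longrightarrow> i < j \<Longrightarrow> j < q \<Longrightarrow> \<pi> (ys ! i) < \<pi> (ys ! j)"
    and down: "\<And>i j. q < i \<Longrightarrow> i < j \<Longrightarrow> j < length ys - 1 \<Longrightarrow> \<pi> (ys ! j) < \<pi> (ys ! i)"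
    and sink: "\<And>i. 0 < i \<Longrightarrow> i < length ys - 1 \<Longrightarrow> i \<noteq> q \<Longrightarrow> \<pi> (ys ! q) < \<pi> (ys ! i)"
    using exists_ear_order[OF fin e q0 long inj'] by blast
  have old: "card (WReach s ?G' \<pi> x) \<le> wreach_bound q s" if "x \<in> verts G - ?D" "s \<le> r" for x s
    using bounded that WReach_cong[of ?G' \<pi> \<pi>' x s] agree
    unfolding wreach_bounded_def by (simp add: verts_del_verts)
  have "card (WReach s G \<pi> w) \<le> wreach_bound q s" if w: "w \<in> verts G" and s: "s \<le> r" for w s
  proof (cases "w \<in> ?D")
    case False
    have "card (WReach s G \<pi> w) \<le> card (WReach s ?G' \<pi> w)"
    proof (rule card_WReach_le_del_verts[OF fin above])
      show "w \<in> verts G - ?D" using w False by simp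
      show "set xs \<inter> ?D = {}"
        if "is_path G xs" "hd xs \<notin> ?D" "last xs \<notin> ?D" "length xs - 1 \<le> s" for xs
        using short_path_avoids_strict_ear[OF e that(1-3)] that(4) s rq long by linarith
    qed
    also have "\<dots> \<le> wreach_bound q s" using old w s False by simp
    finally show ?thesis .
  next
    case True
    then obtain k where k: "0 < k" "k < length ys - 1" "w = ys ! k"
      unfolding mem_internal_iff by blast
    show ?thesis
      unfolding k(3)
      by (rule card_WReach_ear_internal[where \<pi> = \<pi>, OF e fin _ _ _ up down sink above])
        (use long s rq old k in auto)
  qed
  then show ?thesis using inj unfolding wreach_bounded_def by blast
qed

subsection \<open>Path degenerate graphs\<close>

lemma p_reduction_del_verts: "p_reduction p G G' \<Longrightarrow> \<exists>S. G' = del_verts G S"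
  by (induction rule: p_reduction.induct) auto

lemma wreach_bounded_if_reduces:
  assumes "(p_reduction (2 * q))\<^sup>*\<^sup>* G ({}, {})" and "r < q"
  shows "wf_graph G \<Longrightarrow> \<exists>\<pi>. wreach_bounded q r G \<pi>"
  using assms(1)
proof (induction rule: converse_rtranclp_induct)
  case base
  show ?case by (simp add: wreach_bounded_def verts_def)
next
  case (step G G')
  obtain S where S: "G' = del_verts G S" using p_reduction_del_verts[OF step.hyps(1)] by blast
  then obtain \<pi>' where \<pi>': "wreach_bounded q r G' \<pi>'"
    using step.IH wf_graph_del_verts[OF step.prems] by blast
  from step.hyps(1) show ?case
  proof cases
    case (isolated v)
    then show ?thesis using wreach_bounded_del_low_degree[OF step.prems] \<pi>' assms(2) by simp
  next
    case (leaf v)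
    then show ?thesis using wreach_bounded_del_low_degree[OF step.prems] \<pi>' assms(2) by simp
  next
    case (ear xs)
    then show ?thesis using wreach_bounded_del_strict_ear[OF step.prems] \<pi>' assms(2) by simp
  qed
qed

lemma wcol_le_wreach_bound:
  assumes "wf_graph G" "p_path_degenerate (2 * q) G" "r < q"
  shows "wcol r G \<le> wreach_bound q r"
proof -
  obtain \<pi> where "wreach_bounded q r G \<pi>"
    using wreach_bounded_if_reduces assms unfolding p_path_degenerate_def by blast
  then have "\<exists>\<pi>. inj_on \<pi> (verts G) \<and> (\<forall>v \<in> verts G. card (WReach r G \<pi> v) \<le> wreach_bound q r)"
    unfolding wreach_bounded_def by blast
  then show ?thesis unfolding wcol_def by (rule Least_le)
qed

theorem mainTheorem19:
  fixes C :: "'a graph set" and g :: "nat \<Rightarrow> nat" and r :: nat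
  assumes graphs: "\<forall>G \<in> C. wf_graph G"
    and r: "r \<ge> 1"
    and subexp: "subexp_expansion C"
    and g: "\<forall>p \<ge> 2. \<forall>G \<in> C. enat (g p) \<le> girth G \<longrightarrow> p_path_degenerate p G"
  shows "\<forall>G \<in> C.
     (\<forall>q::nat. r < q \<and> q < 2 * r \<and> enat (g (2 * q)) \<le> girth G \<longrightarrow>
        int (wcol r G) \<le> int r + 2 + \<lfloor>log 2 (real (q - 1) / real (q - r))\<rfloor>) \<and>
     (enat (g (4 * r)) \<le> girth G \<longrightarrow> wcol r G \<le> r + 2)"
proof (intro ballI conjI allI impI)
  fix G q assume G: "G \<in> C" and q: "r < q \<and> q < 2 * r \<and> enat (g (2 * q)) \<le> girth G"
  have "wcol r G \<le> wreach_bound q r"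
    using wcol_le_wreach_bound[of G q r] graphs g G q by simp
  then have "int (wcol r G) \<le> int r + 1 + int (log_excess q r)"
    unfolding wreach_bound_def by simp
  also have "\<dots> \<le> int r + 2 + \<lfloor>log 2 (real (q - 1) / real (q - r))\<rfloor>"
    using log_excess_le_floor_log[of r q] q r by simp
  finally show "int (wcol r G) \<le> int r + 2 + \<lfloor>log 2 (real (q - 1) / real (q - r))\<rfloor>" .
next
  fix G assume G: "G \<in> C" and girth: "enat (g (4 * r)) \<le> girth G"
  have "wcol r G \<le> wreach_bound (2 * r) r"
    using wcol_le_wreach_bound[OF _ _, of G "2 * r" r] graphs g G girth r
    by (simp add: mult.assoc[symmetric])
  then show "wcol r G \<le> r + 2" using log_excess_double[of r] r unfolding wreach_bound_def by simp
qed

end
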